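(* Let $f_1,\dots,f_n:\mathbb{R}^d\to\mathbb{R}$ be such that each $f_i$ is $L_i$-smooth and has a minimizer $x_i$. Let $\alpha_1,\dots,\alpha_n\in(0,1)$ and $\tilde f(x) = \frac{1}{n}\sum_{i=1}^n f_i(\alpha_i x + (1-\alpha_i)x_i)$. Let $\hat L = \frac{1}{n}\sum_{i=1}^n L_i$, $L_\alpha = \frac{1}{n}\sum_{i=1}^n \alpha_i^2 L_i$, $w_i = \frac{\alpha_i^2 L_i}{n L_\alpha}$, $x^{\mathrm{avg}} = \sum_{i=1}^n w_i x_i$, and $D = \max_{i\neq j}\|x_i - x_j\|^2$. Fix $\epsilon>0$ and assume that either $\max_{i} \alpha_i \leq \sqrt{2\epsilon}/\sqrt{\hat L D}$, or $\alpha_i = \beta$ for all $i$ with $\beta \leq \sqrt{2\epsilon}/\sqrt{\hat L D}$. Then $x^{\mathrm{avg}}$ is an $\epsilon$-approximate minimizer of $\tilde f$, i.e. $\tilde f(x^{\mathrm{avg}}) - \inf_{x\in\mathbb{R}^d}\tilde f(x) \leq \epsilon$.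
   Context: A differentiable function $g$ is $L$-smooth if $\|\nabla g(x) - \nabla g(y)\| \leq L\|x-y\|$ for all $x,y$. *)

theory Defs
  imports "HOL-Analysis.Analysis"
begin

definition L_smooth :: "real \<Rightarrow> ('a::euclidean_space \<Rightarrow> real) \<Rightarrow> bool" where
  "L_smooth L g \<longleftrightarrow> (\<exists>G. (\<forall>x. (g has_derivative (\<lambda>h. G x \<bullet> h)) (at x)) \<and>
                          (\<forall>x y. norm (G x - G y) \<le> L * norm (x - y)))"

end

theory Submission
  imports Defs
begin

text \<open>An \<open>L\<close>-smooth function exceeds its minimum by at most \<open>L/2\<close> times the squared
  distance to a minimizer.  Each \<open>f\<^sub>i\<close> is evaluated at \<open>\<alpha>\<^sub>i x + (1 - \<alpha>\<^sub>i) x\<^sub>i\<close>, at distance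
  \<open>\<alpha>\<^sub>i \<parallel>x - x\<^sub>i\<parallel>\<close> from its minimizer, and every convex combination \<open>x\<close> of the minimizers
  satisfies \<open>\<parallel>x - x\<^sub>i\<parallel>\<^sup>2 \<le> D\<close>.  So at such a point the averaged function exceeds the average
  of the minima, a lower bound for its infimum, by at most \<open>(max \<alpha>\<^sub>i)\<^sup>2 L\<^sub>h\<^sub>a\<^sub>t D / 2\<close>, which
  the hypothesis on \<open>\<alpha>\<close> bounds by \<open>\<epsilon>\<close>.  The weights \<open>w\<^sub>i\<close> matter only through being
  convex weights.\<close>

lemma L_smooth_le_min_plus_sq_dist:
  fixes g :: "'a::euclidean_space \<Rightarrow> real"
  assumes smooth: "L_smooth L g" and min: "\<forall>y. g x0 \<le> g y"
  shows "g y \<le> g x0 + L / 2 * (norm (y - x0))\<^sup>2"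
proof -
  obtain G where deriv: "\<And>x. (g has_derivative (\<lambda>h. G x \<bullet> h)) (at x)"
    and lip: "\<And>x y. norm (G x - G y) \<le> L * norm (x - y)"
    using smooth unfolding L_smooth_def by blast
  have "(\<lambda>h. G x0 \<bullet> h) = (\<lambda>h. 0)"
    by (rule differential_zero_maxmin[of x0 UNIV g]) (use deriv min in auto)
  then have G0: "G x0 = 0"
    by (metis inner_eq_zero_iff)
  define v where "v = y - x0"
  define h where "h = (\<lambda>t. g (x0 + t *\<^sub>R v) - L / 2 * t\<^sup>2 * (norm v)\<^sup>2)"
  have deriv_h: "(h has_real_derivative (G (x0 + t *\<^sub>R v) \<bullet> v - L * t * (norm v)\<^sup>2)) (at t)"
    for t
  proof -
    have "((g \<circ> (\<lambda>t. x0 + t *\<^sub>R v)) has_derivative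
            ((\<lambda>h. G (x0 + t *\<^sub>R v) \<bullet> h) \<circ> (\<lambda>s. s *\<^sub>R v))) (at t)"
      by (rule diff_chain_at[OF _ deriv]) (auto intro!: derivative_eq_intros)
    then have g_line: "((\<lambda>t. g (x0 + t *\<^sub>R v)) has_real_derivative (G (x0 + t *\<^sub>R v) \<bullet> v)) (at t)"
      unfolding has_field_derivative_def o_def
      by (simp add: mult.commute[of _ "G (x0 + t *\<^sub>R v) \<bullet> v"])
    show ?thesis
      unfolding h_def by (rule derivative_eq_intros g_line refl)+ (simp add: power2_eq_square)
  qed
  have "G (x0 + t *\<^sub>R v) \<bullet> v - L * t * (norm v)\<^sup>2 \<le> 0" if "0 \<le> t" for t
  proof -
    have "G (x0 + t *\<^sub>R v) \<bullet> v \<le> norm (G (x0 + t *\<^sub>R v) - G x0) * norm v"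
      by (simp add: G0 norm_cauchy_schwarz)
    also have "\<dots> \<le> L * norm (t *\<^sub>R v) * norm v"
      using lip[of "x0 + t *\<^sub>R v" x0] by (simp add: mult_right_mono)
    also have "\<dots> = L * t * (norm v)\<^sup>2"
      using that by (simp add: power2_eq_square)
    finally show ?thesis by simp
  qed
  then have "h 1 \<le> h 0"
    using deriv_h by (intro DERIV_nonpos_imp_nonincreasing[of 0 1 h]) (auto intro!: exI)
  then show ?thesis
    unfolding h_def v_def by simp
qed

lemma L_smooth_shrink_toward_min:
  fixes g :: "'a::euclidean_space \<Rightarrow> real"
  assumes "L_smooth L g" and "\<forall>y. g x0 \<le> g y"
  shows "g (a *\<^sub>R x + (1 - a) *\<^sub>R x0) \<le> g x0 + L / 2 * (a\<^sup>2 * (norm (x - x0))\<^sup>2)"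
proof -
  have "a *\<^sub>R x + (1 - a) *\<^sub>R x0 - x0 = a *\<^sub>R (x - x0)"
    by (simp add: algebra_simps)
  then show ?thesis
    using L_smooth_le_min_plus_sq_dist[OF assms, of "a *\<^sub>R x + (1 - a) *\<^sub>R x0"]
    by (simp add: power_mult_distrib)
qed

lemma norm_convex_combination_diff_le:
  fixes x :: "'i \<Rightarrow> 'a::real_normed_vector"
  assumes "finite I" and "\<forall>j\<in>I. w j \<ge> 0" and "sum w I = 1"
    and "\<forall>j\<in>I. norm (x j - y) \<le> r"
  shows "norm ((\<Sum>j\<in>I. w j *\<^sub>R x j) - y) \<le> r"
proof -
  have "(\<Sum>j\<in>I. w j *\<^sub>R x j) - y = (\<Sum>j\<in>I. w j *\<^sub>R (x j - y))"
    using assms(3) by (simp add: scaleR_diff_right sum_subtractf scaleR_sum_left[symmetric])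
  also have "norm \<dots> \<le> (\<Sum>j\<in>I. w j * r)"
    using assms(2,4) by (intro sum_norm_le) (simp add: mult_left_mono)
  also have "\<dots> = r"
    using assms(3) by (simp add: sum_distrib_right[symmetric])
  finally show ?thesis .
qed

lemma normalized_weights:
  fixes c :: "'i \<Rightarrow> real"
  assumes "\<forall>i\<in>I. c i \<ge> 0" and "sum c I > 0"
  shows "\<forall>i\<in>I. c i / sum c I \<ge> 0" and "(\<Sum>i\<in>I. c i / sum c I) = 1"
  using assms by (simp_all add: sum_divide_distrib[symmetric])

lemma shrunk_average_gap_le:
  fixes f :: "nat \<Rightarrow> 'a::euclidean_space \<Rightarrow> real"
  assumes L_nonneg: "\<forall>i<n. L i \<ge> 0"
    and smooth: "\<forall>i<n. L_smooth (L i) (f i)"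
    and minimizer: "\<forall>i<n. \<forall>y. f i (xs i) \<le> f i y"
    and alpha_bound: "\<forall>i<n. 0 \<le> \<alpha> i \<and> \<alpha> i \<le> M"
    and w_nonneg: "\<forall>i<n. w i \<ge> 0" and w_sum: "(\<Sum>i<n. w i) = 1"
    and diam: "\<forall>i<n. \<forall>j<n. (norm (xs i - xs j))\<^sup>2 \<le> D"
  defines "ft \<equiv> \<lambda>x. (\<Sum>i<n. f i (\<alpha> i *\<^sub>R x + (1 - \<alpha> i) *\<^sub>R xs i)) / real n"
  shows "ft (\<Sum>i<n. w i *\<^sub>R xs i) - (INF x. ft x) \<le> M\<^sup>2 * ((\<Sum>i<n. L i) / real n * D) / 2"
proof -
  define xa where "xa = (\<Sum>i<n. w i *\<^sub>R xs i)"
  have dist: "(norm (xa - xs i))\<^sup>2 \<le> D" if "i < n" for i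
  proof -
    have "norm (xa - xs i) \<le> sqrt D"
      unfolding xa_def using w_nonneg w_sum diam \<open>i < n\<close>
      by (intro norm_convex_combination_diff_le) (auto intro: real_le_rsqrt)
    then have "(norm (xa - xs i))\<^sup>2 \<le> (sqrt D)\<^sup>2"
      by (intro power_mono) simp_all
    moreover have "0 \<le> D"
      using diam \<open>i < n\<close> by force
    ultimately show ?thesis
      by simp
  qed
  have "f i (\<alpha> i *\<^sub>R xa + (1 - \<alpha> i) *\<^sub>R xs i) \<le> f i (xs i) + L i / 2 * (M\<^sup>2 * D)"
    if "i < n" for i
  proof -
    have "(\<alpha> i)\<^sup>2 * (norm (xa - xs i))\<^sup>2 \<le> M\<^sup>2 * D"
      using alpha_bound dist that by (intro mult_mono power_mono) auto
    then have "L i / 2 * ((\<alpha> i)\<^sup>2 * (norm (xa - xs i))\<^sup>2) \<le> L i / 2 * (M\<^sup>2 * D)"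
      using L_nonneg that by (intro mult_left_mono) auto
    then show ?thesis
      using L_smooth_shrink_toward_min[of "L i" "f i" "xs i" "\<alpha> i" xa] smooth minimizer that
      by fastforce
  qed
  then have "ft xa \<le> (\<Sum>i<n. f i (xs i) + L i / 2 * (M\<^sup>2 * D)) / real n"
    unfolding ft_def by (intro divide_right_mono sum_mono) auto
  also have "\<dots> = (\<Sum>i<n. f i (xs i)) / real n + M\<^sup>2 * ((\<Sum>i<n. L i) / real n * D) / 2"
  proof -
    have "(\<Sum>i<n. L i / 2 * (M\<^sup>2 * D)) = M\<^sup>2 * ((\<Sum>i<n. L i) * D) / 2"
      by (simp add: sum_distrib_left sum_distrib_right sum_divide_distrib mult_ac)
    then show ?thesis
      by (simp only: sum.distrib add_divide_distrib) simp
  qed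
  finally have "ft xa \<le> (\<Sum>i<n. f i (xs i)) / real n + M\<^sup>2 * ((\<Sum>i<n. L i) / real n * D) / 2" .
  moreover have "(\<Sum>i<n. f i (xs i)) / real n \<le> (INF x. ft x)"
    unfolding ft_def using minimizer by (intro cINF_greatest divide_right_mono sum_mono) auto
  ultimately show ?thesis
    unfolding xa_def by linarith
qed

lemma mult_sqrt_le_sqrt_imp_sq_mult_le:
  fixes a b c :: real
  assumes "0 \<le> a" and "0 \<le> b" and "a * sqrt b \<le> sqrt c"
  shows "a\<^sup>2 * b \<le> c"
proof -
  have "(a * sqrt b)\<^sup>2 \<le> (sqrt c)\<^sup>2"
    using assms by (intro power_mono) auto
  moreover have "0 \<le> c"
    using assms by (metis mult_nonneg_nonneg order_trans real_sqrt_ge_0_iff)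
  ultimately show ?thesis
    using assms by (simp add: power_mult_distrib)
qed

theorem theorem1:
  fixes n :: nat
    and f :: "nat \<Rightarrow> real ^ 'd \<Rightarrow> real"
    and L :: "nat \<Rightarrow> real"
    and xs :: "nat \<Rightarrow> real ^ 'd"
    and \<alpha> :: "nat \<Rightarrow> real"
    and \<epsilon> :: real
  assumes n_pos: "n \<ge> 1"
    and L_pos: "\<forall>i<n. L i > 0"
    and smooth: "\<forall>i<n. L_smooth (L i) (f i)"
    and minimizer: "\<forall>i<n. \<forall>y. f i (xs i) \<le> f i y"
    and alpha_range: "\<forall>i<n. 0 < \<alpha> i \<and> \<alpha> i < 1"
    and eps_pos: "\<epsilon> > 0"
    and cond: "let Lhat = (\<Sum>i<n. L i) / real n;
                   D = Max {(norm (xs i - xs j))\<^sup>2 | i j. i < n \<and> j < n}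
               in (Max (\<alpha> ` {..<n}) * sqrt (Lhat * D) \<le> sqrt (2 * \<epsilon>))
                  \<or> (\<exists>\<beta>. (\<forall>i<n. \<alpha> i = \<beta>) \<and> \<beta> * sqrt (Lhat * D) \<le> sqrt (2 * \<epsilon>))"
  shows "let ftilde = (\<lambda>x. (\<Sum>i<n. f i (\<alpha> i *\<^sub>R x + (1 - \<alpha> i) *\<^sub>R xs i)) / real n);
             L\<alpha> = (\<Sum>i<n. (\<alpha> i)\<^sup>2 * L i) / real n;
             w = (\<lambda>i. (\<alpha> i)\<^sup>2 * L i / (real n * L\<alpha>));
             xavg = (\<Sum>i<n. w i *\<^sub>R xs i)
         in ftilde xavg - (INF x. ftilde x) \<le> \<epsilon>"
proof -
  define Lhat where "Lhat = (\<Sum>i<n. L i) / real n"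
  define D where "D = Max {(norm (xs i - xs j))\<^sup>2 | i j. i < n \<and> j < n}"
  define M where "M = Max (\<alpha> ` {..<n})"
  have alpha_le_M: "\<forall>i<n. 0 \<le> \<alpha> i \<and> \<alpha> i \<le> M"
    using alpha_range unfolding M_def by (auto intro: less_imp_le)
  have diam: "\<forall>i<n. \<forall>j<n. (norm (xs i - xs j))\<^sup>2 \<le> D"
    unfolding D_def by (auto intro!: Max_ge finite_image_set2)
  have "M * sqrt (Lhat * D) \<le> sqrt (2 * \<epsilon>)"
  proof -
    have "\<alpha> ` {..<n} = {\<beta>}" if "\<forall>i<n. \<alpha> i = \<beta>" for \<beta>
      using that n_pos by (auto intro!: image_eqI[of \<beta> _ 0])
    then show ?thesis
      using cond unfolding Let_def Lhat_def D_def M_def by fastforce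
  qed
  moreover have "0 \<le> Lhat * D"
    using L_pos diam n_pos unfolding Lhat_def
    by (intro mult_nonneg_nonneg divide_nonneg_nonneg sum_nonneg) (force intro: less_imp_le)+
  ultimately have gap_bound: "M\<^sup>2 * (Lhat * D) / 2 \<le> \<epsilon>"
    using alpha_le_M n_pos mult_sqrt_le_sqrt_imp_sq_mult_le[of M "Lhat * D" "2 * \<epsilon>"] by auto
  define c where "c = (\<lambda>i. (\<alpha> i)\<^sup>2 * L i)"
  define ft where "ft = (\<lambda>x. (\<Sum>i<n. f i (\<alpha> i *\<^sub>R x + (1 - \<alpha> i) *\<^sub>R xs i)) / real n)"
  define xavg where "xavg = (\<Sum>i<n. (c i / (real n * ((\<Sum>i<n. c i) / real n))) *\<^sub>R xs i)"
  have "real n * ((\<Sum>i<n. c i) / real n) = (\<Sum>i<n. c i)"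
    using n_pos by simp
  moreover have "(\<Sum>i<n. c i) > 0"
    unfolding c_def using L_pos alpha_range n_pos by (intro sum_pos) (auto simp: lessThan_empty_iff)
  moreover note normalized_weights[of "{..<n}" c]
  ultimately have "ft xavg - (INF x. ft x) \<le> M\<^sup>2 * (Lhat * D) / 2"
    unfolding ft_def xavg_def Lhat_def using L_pos
    by (intro shrunk_average_gap_le[OF _ smooth minimizer alpha_le_M _ _ diam])
      (auto simp: c_def less_imp_le)
  then have "ft xavg - (INF x. ft x) \<le> \<epsilon>"
    using gap_bound by linarith
  then show ?thesis
    unfolding Let_def c_def ft_def xavg_def by simp
qed

end
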